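(* For entitlements $e_1,\dots,e_n>0$ with $\sum_ie_i=1$ and any reported demands $d_1,\dots,d_n\ge0$, if $d_i<e_i$ then the MMF allocation to agent $i$ equals $d_i$.
   Context: MMF$(e,d)$: set $r=1$, $E=1$, $S=\{1,\dots,n\}$, $a=0$; process agents $j$ in ascending order of $d_j/e_j$; if $d_j<re_j/E$, set $a_j=d_j$, remove $j$ from $S$, $r\leftarrow r-d_j$, $E\leftarrow E-e_j$ and continue; otherwise set $a_k=re_k/E$ for all $k\in S$ and stop; output $a$. *)

theory Defs
  imports Main Complex_Main
begin

text \<open>The list holds the agents of S still to be
processed, in ascending order of d_j/e_j; r is the remaining resource, E the
remaining entitlement. Agents processed earlier keep their value d_j (set by the
outer update), agents never touched keep the initial value 0.\<close>
fun mmf_loop :: "(nat \<Rightarrow> real) \<Rightarrow> (nat \<Rightarrow> real) \<Rightarrow> real \<Rightarrow> real \<Rightarrow> nat list \<Rightarrow> (nat \<Rightarrow> real)" where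
  "mmf_loop e d r E [] = (\<lambda>k. 0)"
| "mmf_loop e d r E (j # js) =
     (if d j < r * e j / E
      then (mmf_loop e d (r - d j) (E - e j) js)(j := d j)
      else (\<lambda>k. if k \<in> set (j # js) then r * e k / E else 0))"

definition MMF :: "(nat \<Rightarrow> real) \<Rightarrow> (nat \<Rightarrow> real) \<Rightarrow> nat list \<Rightarrow> (nat \<Rightarrow> real)" where
  "MMF e d ord = mmf_loop e d 1 1 ord"

definition mmf_order :: "nat \<Rightarrow> (nat \<Rightarrow> real) \<Rightarrow> (nat \<Rightarrow> real) \<Rightarrow> nat list \<Rightarrow> bool" where
  "mmf_order n e d ord \<longleftrightarrow> distinct ord \<and> set ord = {..<n} \<and>
     sorted_wrt (\<lambda>i j. d i / e i \<le> d j / e j) ord"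

end

theory Submission
  imports Defs
begin

text \<open>The ratio r/E of remaining resource to remaining entitlement never decreases along
the run: an agent is only granted its demand when that demand is below its share
r e_j/E. When the run stops at agent j, every agent still waiting (i included, by
sortedness) has d_i/e_i \<ge> d_j/e_j \<ge> r/E \<ge> 1, so d_i \<ge> e_i. Hence an agent with
d_i < e_i must have been granted d_i before the stop.\<close>

lemma share_le_remaining_share:
  fixes r E d e :: real
  assumes "0 < e" "e < E" "d < r * e / E"
  shows "r / E \<le> (r - d) / (E - e)"
proof -
  have "0 < E" using assms(1,2) by linarith
  then have "d * E < r * e" using assms(3) by (simp add: field_simps)
  then have "r * (E - e) \<le> (r - d) * E" by (simp add: algebra_simps)
  then show ?thesis using \<open>0 < E\<close> assms(2) by (simp add: field_simps)
qed

lemma mmf_loop_grants_demand_below_share: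
  assumes "\<forall>k\<in>set js. 0 < e k" "E = sum_list (map e js)"
    and "sorted_wrt (\<lambda>i j. d i / e i \<le> d j / e j) js"
    and "i \<in> set js" "d i / e i < r / E"
  shows "mmf_loop e d r E js i = d i"
  using assms
proof (induction js arbitrary: r E)
  case Nil
  then show ?case by simp
next
  case (Cons j js)
  have "0 < e j" using Cons.prems(1) by simp
  have rest_nonneg: "0 \<le> sum_list (map e js)"
    using Cons.prems(1) by (intro sum_list_nonneg) (auto intro: less_imp_le)
  have "0 < E" using Cons.prems(2) \<open>0 < e j\<close> rest_nonneg by simp
  have "d j / e j \<le> d i / e i" using Cons.prems(3,4) by auto
  show ?case
  proof (cases "d j < r * e j / E")
    case granted: True
    show ?thesis
    proof (cases "i = j")
      case True
      then show ?thesis using granted by simp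
    next
      case False
      then have "i \<in> set js" using Cons.prems(4) by simp
      then have "e i \<le> sum_list (map e js)"
        using Cons.prems(1) by (intro member_le_sum_list) (auto intro: less_imp_le)
      moreover have "0 < e i" using Cons.prems(1,4) by blast
      ultimately have "0 < sum_list (map e js)" by linarith
      then have "r / E \<le> (r - d j) / (E - e j)"
        using share_le_remaining_share[OF \<open>0 < e j\<close> _ granted] Cons.prems(2) by simp
      then have "mmf_loop e d (r - d j) (E - e j) js i = d i"
        using Cons.prems \<open>i \<in> set js\<close> by (intro Cons.IH) auto
      then show ?thesis using granted False by simp
    qed
  next
    case False
    then have "r / E \<le> d j / e j" using \<open>0 < E\<close> \<open>0 < e j\<close> by (simp add: field_simps)
    then show ?thesis using \<open>d j / e j \<le> d i / e i\<close> Cons.prems(5) by linarith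
  qed
qed

theorem mainTheorem12:
  fixes n :: nat and e d :: "nat \<Rightarrow> real" and ord :: "nat list" and i :: nat
  assumes "\<forall>k<n. e k > 0"
    and "(\<Sum>k<n. e k) = 1"
    and "\<forall>k<n. d k \<ge> 0"
    and "mmf_order n e d ord"
    and "i < n"
    and "d i < e i"
  shows "MMF e d ord i = d i"
proof -
  have ord: "distinct ord" "set ord = {..<n}" "sorted_wrt (\<lambda>i j. d i / e i \<le> d j / e j) ord"
    using assms(4) unfolding mmf_order_def by auto
  have "sum_list (map e ord) = 1"
    using ord(1,2) assms(2) by (simp add: sum_list_distinct_conv_sum_set)
  moreover have "d i / e i < 1 / 1" using assms(1,5,6) by simp
  ultimately show ?thesis
    unfolding MMF_def
    by (intro mmf_loop_grants_demand_below_share[OF _ _ ord(3)]) (use ord(2) assms(1,5) in auto)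
qed

end
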